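(* Let $f$ be any function of unitation on $\{0,1\}^n$. Consider the $(\mu+1)$ EA with phenotypic clearing with clearing radius $\sigma=1$, niche capacity $\kappa\in\mathbb{N}$ and population size $\mu\geq (n+1)\cdot\kappa$ on $f$. Then winners are never removed from the population, i.e., if $x\in P_t$ is a winner then $x\in P_{t+1}$.
   Context: A function of unitation is $f:\{0,1\}^n\to\mathbb{R}$ with $f(x)=u(|x|_1)$ for some $u:\{0,\dots,n\}\to\mathbb{R}^+$, where $|x|_1$ is the number of 1-bits of $x$; fitness values are assumed positive. The $(\mu+1)$ EA with clearing (population size $\mu$, clearing radius $\sigma$, niche capacity $\kappa$, distance function $\mathrm{d}$): $P_0$ consists of $\mu$ bit strings chosen independently and uniformly at random. In generation $t$: choose a parent $x\in P_t$ uniformly at random; create $y$ by flipping each bit of $x$ independently with probability $1/n$; let $P_t^*=P_t\cup\{y\}$; update the fitness values of $P_t^*$ by the clearing procedure: sort $P_t^*$ by decreasing fitness; for $i=1,\dots,|P_t^*|$, if the current fitness of $P[i]$ is positive, set $w:=1$ and for $j=i+1,\dots,|P_t^*|$: if the current fitness of $P[j]$ is positive and $\mathrm{d}(P[i],P[j])<\sigma$ then, if $w<\kappa$ set $w:=w+1$, else set the fitness of $P[j]$ to $0$. Individuals whose fitness is not reset to $0$ are winners, the others are cleared. Then choose $z\in P_t$ with worst (cleared) fitness uniformly at random; if the (cleared) fitness of $y$ is at least that of $z$, set $P_{t+1}=P_t^*\setminus\{z\}$, otherwise $P_{t+1}=P_t^*\setminus\{y\}$. Phenotypic clearing uses $\mathrm{d}(x,y)=\big||x|_1-|y|_1\big|$.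 *)

theory Defs
  imports Main "HOL.Real"
begin

(* Bit strings are bool lists (of length n); True = 1-bit. *)
definition unitation :: "bool list \<Rightarrow> nat" where
  "unitation x = count_list x True"

definition pheno_dist :: "bool list \<Rightarrow> bool list \<Rightarrow> real" where
  "pheno_dist x y = \<bar>real (unitation x) - real (unitation y)\<bar>"

(* One step of the inner loop of clearing: individual a (index into Q) is the
   current niche representative, b the next individual in sorted order;
   state (w, cf) = (winner counter, current fitness of all indices). *)
definition clear_inner ::
  "('a \<Rightarrow> 'a \<Rightarrow> real) \<Rightarrow> real \<Rightarrow> nat \<Rightarrow> 'a list \<Rightarrow> nat
     \<Rightarrow> nat \<Rightarrow> nat \<times> (nat \<Rightarrow> real) \<Rightarrow> nat \<times> (nat \<Rightarrow> real)" where
  "clear_inner d \<sigma> \<kappa> Q a b s =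
     (case s of (w, cf) \<Rightarrow>
       if cf b > 0 \<and> d (Q ! a) (Q ! b) < \<sigma>
       then (if w < \<kappa> then (w + 1, cf) else (w, cf(b := 0)))
       else (w, cf))"

fun clearing_loop ::
  "('a \<Rightarrow> 'a \<Rightarrow> real) \<Rightarrow> real \<Rightarrow> nat \<Rightarrow> 'a list \<Rightarrow> nat list
     \<Rightarrow> (nat \<Rightarrow> real) \<Rightarrow> (nat \<Rightarrow> real)" where
  "clearing_loop d \<sigma> \<kappa> Q [] cf = cf"
| "clearing_loop d \<sigma> \<kappa> Q (a # rest) cf =
     clearing_loop d \<sigma> \<kappa> Q rest
       (if cf a > 0 then snd (fold (clear_inner d \<sigma> \<kappa> Q a) rest (1, cf)) else cf)"

definition cleared_fitness ::
  "('a \<Rightarrow> real) \<Rightarrow> ('a \<Rightarrow> 'a \<Rightarrow> real) \<Rightarrow> real \<Rightarrow> nat \<Rightarrow> 'a list \<Rightarrow> nat list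
     \<Rightarrow> nat \<Rightarrow> real" where
  "cleared_fitness f d \<sigma> \<kappa> Q ord = clearing_loop d \<sigma> \<kappa> Q ord (\<lambda>i. f (Q ! i))"

definition valid_sort :: "('a \<Rightarrow> real) \<Rightarrow> 'a list \<Rightarrow> nat list \<Rightarrow> bool" where
  "valid_sort f Q ord \<longleftrightarrow> distinct ord \<and> set ord = {..<length Q}
     \<and> sorted_wrt (\<lambda>i j. f (Q ! i) \<ge> f (Q ! j)) ord"

definition winner ::
  "('a \<Rightarrow> real) \<Rightarrow> ('a \<Rightarrow> 'a \<Rightarrow> real) \<Rightarrow> real \<Rightarrow> nat \<Rightarrow> 'a list \<Rightarrow> nat list
     \<Rightarrow> nat \<Rightarrow> bool" where
  "winner f d \<sigma> \<kappa> Q ord i \<longleftrightarrow> cleared_fitness f d \<sigma> \<kappa> Q ord i \<noteq> 0"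

(* Index (into P_t^* = P @ [y], y has index length P) of the individual removed,
   given the cleared fitness cf and the chosen worst individual zi of P_t. *)
definition removed_index :: "nat \<Rightarrow> (nat \<Rightarrow> real) \<Rightarrow> nat \<Rightarrow> nat" where
  "removed_index \<mu> cf zi = (if cf \<mu> \<ge> cf zi then zi else \<mu>)"

end

theory Submission
  imports Defs
begin

text \<open>If the removed individual were the winner \<open>i\<close> of \<open>P\<^sub>t\<close>, then \<open>i\<close> would be a worst
  individual of \<open>P\<^sub>t\<close> and the offspring would be at least as good as \<open>i\<close>; as \<open>i\<close> has positive
  cleared fitness, all \<open>\<mu> + 1\<close> individuals of \<open>P\<^sub>t\<^sup>*\<close> would be winners. With \<open>\<sigma> = 1\<close> the niches
  of phenotypic clearing are the \<open>n + 1\<close> unitation levels, each holding at most \<open>\<kappa>\<close> winners,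
  so there are at most \<open>(n + 1) \<kappa> \<le> \<mu>\<close> winners.\<close>

lemma fold_clear_inner_notin:
  "j \<notin> set L \<Longrightarrow> snd (fold (clear_inner d \<sigma> \<kappa> Q a) L (w, cf)) j = cf j"
  by (induction L arbitrary: w cf) (auto simp: clear_inner_def)

lemma fold_clear_inner_cases:
  "snd (fold (clear_inner d \<sigma> \<kappa> Q a) L (w, cf)) j = cf j \<or>
   snd (fold (clear_inner d \<sigma> \<kappa> Q a) L (w, cf)) j = 0"
proof (induction L arbitrary: w cf)
  case Nil
  then show ?case by simp
next
  case (Cons b L)
  let ?s = "clear_inner d \<sigma> \<kappa> Q a b (w, cf)"
  have "snd ?s j = cf j \<or> snd ?s j = 0"
    by (simp add: clear_inner_def)
  then show ?case
    using Cons.IH[of "fst ?s" "snd ?s"] by auto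
qed

lemma fold_clear_inner_card_niche:
  assumes "distinct L" "w \<le> \<kappa>"
    and niche: "\<And>x z. d x z < \<sigma> \<longleftrightarrow> g x = g z"
  shows "w + card {b \<in> set L. g (Q ! b) = g (Q ! a) \<and>
           snd (fold (clear_inner d \<sigma> \<kappa> Q a) L (w, cf)) b > 0} \<le> \<kappa>"
  using assms(1,2)
proof (induction L arbitrary: w cf)
  case Nil
  then show ?case by simp
next
  case (Cons b L)
  let ?F = "\<lambda>w cf. snd (fold (clear_inner d \<sigma> \<kappa> Q a) L (w, cf))"
  let ?S = "\<lambda>w cf. {c \<in> set L. g (Q ! c) = g (Q ! a) \<and> ?F w cf c > 0}"
  have b: "b \<notin> set L" and L: "distinct L"
    using Cons.prems by auto
  show ?case
  proof (cases "cf b > 0 \<and> g (Q ! a) = g (Q ! b)")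
    case close: True
    show ?thesis
    proof (cases "w < \<kappa>")
      case True
      have "clear_inner d \<sigma> \<kappa> Q a b (w, cf) = (w + 1, cf)"
        using close True niche by (simp add: clear_inner_def)
      moreover have "{c \<in> set (b # L). g (Q ! c) = g (Q ! a) \<and> ?F (w + 1) cf c > 0}
                     = insert b (?S (w + 1) cf)"
        using close fold_clear_inner_notin[OF b, of d \<sigma> \<kappa> Q a "w + 1" cf] by auto
      moreover have "w + 1 + card (?S (w + 1) cf) \<le> \<kappa>"
        using Cons.IH[OF L, of "w + 1" cf] True by simp
      ultimately show ?thesis
        using b by simp
    next
      case False
      have "clear_inner d \<sigma> \<kappa> Q a b (w, cf) = (w, cf(b := 0))"
        using close False niche by (simp add: clear_inner_def)
      moreover have "{c \<in> set (b # L). g (Q ! c) = g (Q ! a) \<and> ?F w (cf(b := 0)) c > 0}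
                     = ?S w (cf(b := 0))"
        using fold_clear_inner_notin[OF b, of d \<sigma> \<kappa> Q a w "cf(b := 0)"] by auto
      ultimately show ?thesis
        using Cons.IH[OF L] Cons.prems by simp
    qed
  next
    case False
    then have "clear_inner d \<sigma> \<kappa> Q a b (w, cf) = (w, cf)"
      using niche by (auto simp: clear_inner_def)
    moreover have "{c \<in> set (b # L). g (Q ! c) = g (Q ! a) \<and> ?F w cf c > 0} = ?S w cf"
      using False fold_clear_inner_notin[OF b, of d \<sigma> \<kappa> Q a w cf] by auto
    ultimately show ?thesis
      using Cons.IH[OF L] Cons.prems by simp
  qed
qed

lemma clearing_loop_notin:
  "j \<notin> set L \<Longrightarrow> clearing_loop d \<sigma> \<kappa> Q L cf j = cf j"
  by (induction L arbitrary: cf) (auto simp: fold_clear_inner_notin)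

lemma clearing_loop_cases:
  "clearing_loop d \<sigma> \<kappa> Q L cf j = cf j \<or> clearing_loop d \<sigma> \<kappa> Q L cf j = 0"
proof (induction L arbitrary: cf)
  case Nil
  then show ?case by simp
next
  case (Cons a L)
  define cf' where "cf' = (if cf a > 0 then snd (fold (clear_inner d \<sigma> \<kappa> Q a) L (1, cf)) else cf)"
  have "cf' j = cf j \<or> cf' j = 0"
    using fold_clear_inner_cases[of d \<sigma> \<kappa> Q a L 1 cf j] by (simp add: cf'_def)
  moreover have "clearing_loop d \<sigma> \<kappa> Q (a # L) cf = clearing_loop d \<sigma> \<kappa> Q L cf'"
    by (simp add: cf'_def)
  ultimately show ?case
    using Cons.IH[of cf'] by auto
qed

lemma clearing_loop_pos_imp_pos: "clearing_loop d \<sigma> \<kappa> Q L cf j > 0 \<Longrightarrow> cf j > 0"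
  using clearing_loop_cases[of d \<sigma> \<kappa> Q L cf j] by auto

lemma clearing_loop_card_niche:
  assumes "distinct L" "1 \<le> \<kappa>"
    and niche: "\<And>x z. d x z < \<sigma> \<longleftrightarrow> g x = g z"
  shows "card {j \<in> set L. g (Q ! j) = k \<and> clearing_loop d \<sigma> \<kappa> Q L cf j > 0} \<le> \<kappa>"
  using assms(1)
proof (induction L arbitrary: cf)
  case Nil
  then show ?case by simp
next
  case (Cons a L)
  have a: "a \<notin> set L" and L: "distinct L"
    using Cons.prems by auto
  let ?C = "\<lambda>cf. {j \<in> set L. g (Q ! j) = k \<and> clearing_loop d \<sigma> \<kappa> Q L cf j > 0}"
  let ?W = "{j \<in> set (a # L). g (Q ! j) = k \<and> clearing_loop d \<sigma> \<kappa> Q (a # L) cf j > 0}"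
  show ?case
  proof (cases "cf a > 0")
    case False
    then have "?W = ?C cf"
      using clearing_loop_notin[OF a, of d \<sigma> \<kappa> Q cf] by auto
    then show ?thesis
      using Cons.IH[OF L] by simp
  next
    case True
    define cf' where "cf' = snd (fold (clear_inner d \<sigma> \<kappa> Q a) L (1, cf))"
    have step: "clearing_loop d \<sigma> \<kappa> Q (a # L) cf = clearing_loop d \<sigma> \<kappa> Q L cf'"
      using True by (simp add: cf'_def)
    show ?thesis
    proof (cases "g (Q ! a) = k")
      case False
      then have "?W = ?C cf'"
        using step by auto
      then show ?thesis
        using Cons.IH[OF L] by simp
    next
      case True
      let ?N = "{b \<in> set L. g (Q ! b) = g (Q ! a) \<and> cf' b > 0}"
      have "?C cf' \<subseteq> ?N"
        using True by (auto dest: clearing_loop_pos_imp_pos)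
      then have "card (?C cf') \<le> card ?N"
        by (intro card_mono) auto
      moreover have "1 + card ?N \<le> \<kappa>"
        unfolding cf'_def by (rule fold_clear_inner_card_niche[OF L assms(2) niche])
      moreover have "card ?W \<le> card (insert a (?C cf'))"
        using step by (intro card_mono) auto
      ultimately show ?thesis
        by (simp add: card_insert_if split: if_splits)
    qed
  qed
qed

lemma clearing_loop_card_pos:
  assumes "distinct L" "1 \<le> \<kappa>"
    and niche: "\<And>x z. d x z < \<sigma> \<longleftrightarrow> g x = g z"
  shows "card {j \<in> set L. clearing_loop d \<sigma> \<kappa> Q L cf j > 0}
           \<le> \<kappa> * card ((\<lambda>j. g (Q ! j)) ` set L)"
proof -
  let ?K = "(\<lambda>j. g (Q ! j)) ` set L"
  have "card {j \<in> set L. clearing_loop d \<sigma> \<kappa> Q L cf j > 0}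
        \<le> card (\<Union>k\<in>?K. {j \<in> set L. g (Q ! j) = k \<and> clearing_loop d \<sigma> \<kappa> Q L cf j > 0})"
    by (intro card_mono) auto
  also have "\<dots> \<le> (\<Sum>k\<in>?K. card {j \<in> set L. g (Q ! j) = k \<and> clearing_loop d \<sigma> \<kappa> Q L cf j > 0})"
    by (rule card_UN_le) simp
  also have "\<dots> \<le> (\<Sum>k\<in>?K. \<kappa>)"
    by (intro sum_mono clearing_loop_card_niche[OF assms])
  finally show ?thesis
    by (simp add: mult.commute)
qed

lemma pheno_dist_less_1_iff: "pheno_dist x z < 1 \<longleftrightarrow> unitation x = unitation z"
  unfolding pheno_dist_def by linarith

theorem lemma1:
  fixes n \<mu> \<kappa> :: nat
    and u :: "nat \<Rightarrow> real"
    and P :: "bool list list"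
    and y :: "bool list"
    and ord :: "nat list"
    and zi i :: nat
  defines "f \<equiv> \<lambda>x. u (unitation x)"
  defines "Q \<equiv> P @ [y]"
  defines "cf \<equiv> cleared_fitness f pheno_dist 1 \<kappa> Q ord"
  assumes u_pos: "\<And>k. k \<le> n \<Longrightarrow> u k > 0"
    and kappa: "\<kappa> \<ge> 1"
    and mu: "\<mu> \<ge> (n + 1) * \<kappa>"
    and P_len: "length P = \<mu>"
    and P_bits: "\<forall>x \<in> set P. length x = n"
    and y_bits: "length y = n"
    and sort: "valid_sort f Q ord"
    and z_worst: "zi < \<mu>" "\<forall>j < \<mu>. cf zi \<le> cf j"
    and i_in: "i < \<mu>"
    and i_win: "winner f pheno_dist 1 \<kappa> Q ord i"
  shows "removed_index \<mu> cf zi \<noteq> i"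
proof
  assume "removed_index \<mu> cf zi = i"
  then have "zi = i" and offspring_ge: "cf i \<le> cf \<mu>"
    using i_in by (auto simp: removed_index_def split: if_splits)
  have indices: "set ord = {..<Suc \<mu>}" and "distinct ord"
    using sort P_len by (auto simp: valid_sort_def Q_def)
  have unitation_le: "unitation (Q ! j) \<le> n" if "j < Suc \<mu>" for j
  proof -
    have "length (Q ! j) = n"
      using that P_len P_bits y_bits by (auto simp: Q_def nth_append)
    then show ?thesis
      by (metis count_le_length unitation_def)
  qed
  have "cf i \<noteq> 0"
    using i_win by (simp add: winner_def cf_def)
  then have "cf i = f (Q ! i)"
    using clearing_loop_cases by (metis cf_def cleared_fitness_def)
  then have "cf i > 0"
    using u_pos unitation_le[of i] i_in by (simp add: f_def)
  then have all_winners: "cf j > 0" if "j < Suc \<mu>" for j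
    using that offspring_ge z_worst(2) \<open>zi = i\<close> by (metis less_Suc_eq order_less_le_trans)
  have "{j \<in> set ord. cf j > 0} = {..<Suc \<mu>}"
    using indices all_winners by auto
  then have "Suc \<mu> = card {j \<in> set ord. cf j > 0}"
    by simp
  also have "\<dots> \<le> \<kappa> * card ((\<lambda>j. unitation (Q ! j)) ` set ord)"
    unfolding cf_def cleared_fitness_def
    by (rule clearing_loop_card_pos[OF \<open>distinct ord\<close> kappa pheno_dist_less_1_iff])
  also have "\<dots> \<le> \<kappa> * card {..n}"
    using indices unitation_le by (intro mult_le_mono2 card_mono) auto
  finally show False
    using mu by (simp add: mult.commute)
qed

end
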